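(* Let $G$ be a graph with a pendant vertex $p$, let $v$ be the neighbor of $p$, and let $G'$ be the subgraph of $G$ induced by $V(G)\setminus\{p,v\}$. (1) $G$ is $A$-AW if and only if $G'$ is $A$-AW. (2) Let $r$ be the smallest positive integer such that $T_{V(G)}^{A(G)}(r)\ne\emptyset$, and let $t\in T_{V(G)}^{A(G)}(r)$. Then $\overline{G}$ is $N$-AW if and only if both of the following hold: (a) for every labeling $\pi$ of $V(G)$ there exists $s\in\mathbb{Z}_\ell$ such that the labeling $\pi_s$ is winnable in the adjacency Lights Out game on $G$; (b) for every $z\in\mathbb{Z}_\ell$ there exists $q\in T_{V(G)}^{A(G)}(0)$ such that the congruence $(r+t)x\equiv z+q \pmod{\ell}$ has a solution $x$.
   Context: All graphs are finite and simple; $\overline{G}$ is the complement. Fix an integer $\ell\ge2$; labelings are maps $V(G)\to\mathbb{Z}_\ell$. In the neighborhood Lights Out game, toggling a vertex $w$ adds $1$ (mod $\ell$) to the label of each vertex of the closed neighborhood $N[w]$; in the adjacency Lights Out game, toggling $w$ adds $1$ to the label of each vertex of the open neighborhood $N(w)$. A game is won when all labels are $0$; a labeling is winnable if the game starting from it can be won. A graph is $N$-AW (resp. $A$-AW) if every labeling is winnable in the neighborhood (resp. adjacency) game. For a labeling $\pi$ and $s\in\mathbb{Z}_\ell$, $\pi_s$ is the labeling $\pi_s(w)=\pi(w)+s$ for all $w$. For $U\subseteq V(G)$ and $r\in\mathbb{Z}_\ell$, the set of toggling numbers $T_U^{A(G)}(r)\subseteq\mathbb{Z}_\ell$ consists of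 all $t$ such that the adjacency game on $G$ starting from the labeling that is $r$ on $U$ and $0$ elsewhere can be won by a sequence of toggles in which the vertices of $U$ are toggled a total of $t$ times (mod $\ell$). *)

theory Defs
  imports Main "HOL-Number_Theory.Cong"
begin

text \<open>Labelings and toggle counts are
  integer-valued functions, read modulo the modulus l (so they represent maps
  V -> Z_l). Toggle sequences are represented by the number of times each
  vertex is toggled (order is irrelevant).\<close>

definition simple_graph :: "'a set \<Rightarrow> ('a \<Rightarrow> 'a \<Rightarrow> bool) \<Rightarrow> bool" where
  "simple_graph V E \<longleftrightarrow> finite V \<and> (\<forall>u w. E u w \<longrightarrow> u \<in> V \<and> w \<in> V)
     \<and> (\<forall>u w. E u w \<longrightarrow> E w u) \<and> (\<forall>u. \<not> E u u)"

definition complement_graph :: "'a set \<Rightarrow> ('a \<Rightarrow> 'a \<Rightarrow> bool) \<Rightarrow> 'a \<Rightarrow> 'a \<Rightarrow> bool" where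
  "complement_graph V E u w \<longleftrightarrow> u \<in> V \<and> w \<in> V \<and> u \<noteq> w \<and> \<not> E u w"

definition induced_subgraph :: "('a \<Rightarrow> 'a \<Rightarrow> bool) \<Rightarrow> 'a set \<Rightarrow> 'a \<Rightarrow> 'a \<Rightarrow> bool" where
  "induced_subgraph E W u w \<longleftrightarrow> E u w \<and> u \<in> W \<and> w \<in> W"

definition adj_wins :: "int \<Rightarrow> 'a set \<Rightarrow> ('a \<Rightarrow> 'a \<Rightarrow> bool) \<Rightarrow> ('a \<Rightarrow> int) \<Rightarrow> ('a \<Rightarrow> int) \<Rightarrow> bool" where
  "adj_wins l V E \<pi> x \<longleftrightarrow>
     (\<forall>w\<in>V. [\<pi> w + (\<Sum>u\<in>V. if E u w then x u else 0) = 0] (mod l))"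

definition nbh_wins :: "int \<Rightarrow> 'a set \<Rightarrow> ('a \<Rightarrow> 'a \<Rightarrow> bool) \<Rightarrow> ('a \<Rightarrow> int) \<Rightarrow> ('a \<Rightarrow> int) \<Rightarrow> bool" where
  "nbh_wins l V E \<pi> x \<longleftrightarrow>
     (\<forall>w\<in>V. [\<pi> w + x w + (\<Sum>u\<in>V. if E u w then x u else 0) = 0] (mod l))"

definition adj_winnable :: "int \<Rightarrow> 'a set \<Rightarrow> ('a \<Rightarrow> 'a \<Rightarrow> bool) \<Rightarrow> ('a \<Rightarrow> int) \<Rightarrow> bool" where
  "adj_winnable l V E \<pi> \<longleftrightarrow> (\<exists>x. adj_wins l V E \<pi> x)"

definition nbh_winnable :: "int \<Rightarrow> 'a set \<Rightarrow> ('a \<Rightarrow> 'a \<Rightarrow> bool) \<Rightarrow> ('a \<Rightarrow> int) \<Rightarrow> bool" where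
  "nbh_winnable l V E \<pi> \<longleftrightarrow> (\<exists>x. nbh_wins l V E \<pi> x)"

definition A_AW :: "int \<Rightarrow> 'a set \<Rightarrow> ('a \<Rightarrow> 'a \<Rightarrow> bool) \<Rightarrow> bool" where
  "A_AW l V E \<longleftrightarrow> (\<forall>\<pi>. adj_winnable l V E \<pi>)"

definition N_AW :: "int \<Rightarrow> 'a set \<Rightarrow> ('a \<Rightarrow> 'a \<Rightarrow> bool) \<Rightarrow> bool" where
  "N_AW l V E \<longleftrightarrow> (\<forall>\<pi>. nbh_winnable l V E \<pi>)"

definition toggling_numbers_A ::
  "int \<Rightarrow> 'a set \<Rightarrow> ('a \<Rightarrow> 'a \<Rightarrow> bool) \<Rightarrow> 'a set \<Rightarrow> int \<Rightarrow> int set" where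
  "toggling_numbers_A l V E U r =
     {t. 0 \<le> t \<and> t < l \<and>
         (\<exists>x. adj_wins l V E (\<lambda>w. if w \<in> U then r else 0) x \<and> [(\<Sum>u\<in>U. x u) = t] (mod l))}"

end

theory Submission
  imports Defs
begin

text \<open>
  Toggle vectors act linearly, so both parts are statements about linear congruences modulo l.

  The label of the pendant vertex p changes only when v is toggled, and toggling p changes only
  the label of v. A winning vector therefore toggles v exactly -\<pi>(p) times, its toggles at p
  can always be chosen to clear v, and what remains is the game on G' with -\<pi>(p) added to the
  labels of the neighbours of v.

  In the complement the closed neighbourhood of w is V minus N(w), so toggling -y in the
  neighbourhood game on the complement has the effect of toggling y in the adjacency game on G
  and subtracting the total number of toggles from every label. The pairs (a, s) such that the
  constant labeling a can be won with s toggles in total (mod l) form a subgroup of Z^2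
  containing l Z^2; by a Bezout argument and the minimality of r, each of them is
  k (r, t) + (0, q) with q a toggling number of 0.
\<close>

lemma adj_wins_add:
  assumes "adj_wins l V E \<pi> x" and "adj_wins l V E \<rho> y"
  shows "adj_wins l V E (\<lambda>w. \<pi> w + \<rho> w) (\<lambda>u. x u + y u)"
  unfolding adj_wins_def
proof
  fix w assume "w \<in> V"
  with assms have "[(\<pi> w + (\<Sum>u\<in>V. if E u w then x u else 0))
                    + (\<rho> w + (\<Sum>u\<in>V. if E u w then y u else 0)) = 0 + 0] (mod l)"
    unfolding adj_wins_def by (blast intro: cong_add)
  moreover have "(\<Sum>u\<in>V. if E u w then x u + y u else 0)
      = (\<Sum>u\<in>V. if E u w then x u else 0) + (\<Sum>u\<in>V. if E u w then y u else 0)"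
    by (subst sum.distrib[symmetric]) (rule sum.cong; simp)
  ultimately show "[\<pi> w + \<rho> w + (\<Sum>u\<in>V. if E u w then x u + y u else 0) = 0] (mod l)"
    by (simp add: ac_simps)
qed

lemma adj_wins_scale:
  assumes "adj_wins l V E \<pi> x"
  shows "adj_wins l V E (\<lambda>w. c * \<pi> w) (\<lambda>u. c * x u)"
  unfolding adj_wins_def
proof
  fix w assume "w \<in> V"
  with assms have "[c * (\<pi> w + (\<Sum>u\<in>V. if E u w then x u else 0)) = c * 0] (mod l)"
    unfolding adj_wins_def by (blast intro: cong_scalar_left)
  moreover have "(\<Sum>u\<in>V. if E u w then c * x u else 0) = c * (\<Sum>u\<in>V. if E u w then x u else 0)"
    by (subst sum_distrib_left) (rule sum.cong; simp)
  ultimately show "[c * \<pi> w + (\<Sum>u\<in>V. if E u w then c * x u else 0) = 0] (mod l)"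
    by (simp add: distrib_left)
qed

lemma adj_wins_cong_labels:
  assumes "adj_wins l V E \<pi> x" and "\<And>w. w \<in> V \<Longrightarrow> [\<pi> w = \<rho> w] (mod l)"
  shows "adj_wins l V E \<rho> x"
  unfolding adj_wins_def
proof
  fix w assume "w \<in> V"
  with assms have "[\<rho> w + (\<Sum>u\<in>V. if E u w then x u else 0) = \<pi> w + (\<Sum>u\<in>V. if E u w then x u else 0)] (mod l)"
    by (intro cong_add cong_refl) (simp add: cong_sym)
  moreover have "[\<pi> w + (\<Sum>u\<in>V. if E u w then x u else 0) = 0] (mod l)"
    using assms \<open>w \<in> V\<close> unfolding adj_wins_def by blast
  ultimately show "[\<rho> w + (\<Sum>u\<in>V. if E u w then x u else 0) = 0] (mod l)"
    by (rule cong_trans)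
qed

lemma adj_wins_cong_toggles:
  assumes "\<And>u. u \<in> V \<Longrightarrow> x u = y u"
  shows "adj_wins l V E \<pi> x \<longleftrightarrow> adj_wins l V E \<pi> y"
proof -
  have "(\<Sum>u\<in>V. if E u w then x u else 0) = (\<Sum>u\<in>V. if E u w then y u else 0)" for w
    using assms by (intro sum.cong) auto
  then show ?thesis unfolding adj_wins_def by simp
qed

definition constant_toggling :: "int \<Rightarrow> 'a set \<Rightarrow> ('a \<Rightarrow> 'a \<Rightarrow> bool) \<Rightarrow> int \<Rightarrow> int \<Rightarrow> bool" where
  "constant_toggling l V E a s \<longleftrightarrow> (\<exists>x. adj_wins l V E (\<lambda>_. a) x \<and> [sum x V = s] (mod l))"

lemma toggling_numbers_A_iff:
  "t \<in> toggling_numbers_A l V E V a \<longleftrightarrow> 0 \<le> t \<and> t < l \<and> constant_toggling l V E a t"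
proof -
  have "adj_wins l V E (\<lambda>w. if w \<in> V then a else 0) x \<longleftrightarrow> adj_wins l V E (\<lambda>_. a) x" for x
    unfolding adj_wins_def by auto
  then show ?thesis unfolding toggling_numbers_A_def constant_toggling_def by auto
qed

lemma constant_toggling_add:
  assumes "constant_toggling l V E a s" and "constant_toggling l V E b s'"
  shows "constant_toggling l V E (a + b) (s + s')"
proof -
  obtain x y where "adj_wins l V E (\<lambda>_. a) x" "[sum x V = s] (mod l)"
    and "adj_wins l V E (\<lambda>_. b) y" "[sum y V = s'] (mod l)"
    using assms unfolding constant_toggling_def by blast
  then show ?thesis
    unfolding constant_toggling_def
    by (intro exI[of _ "\<lambda>u. x u + y u"]) (simp add: adj_wins_add sum.distrib cong_add)
qed

lemma constant_toggling_scale: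
  assumes "constant_toggling l V E a s"
  shows "constant_toggling l V E (c * a) (c * s)"
proof -
  obtain x where "adj_wins l V E (\<lambda>_. a) x" "[sum x V = s] (mod l)"
    using assms unfolding constant_toggling_def by blast
  then show ?thesis
    unfolding constant_toggling_def
    by (intro exI[of _ "\<lambda>u. c * x u"]) (simp add: adj_wins_scale sum_distrib_left[symmetric] cong_scalar_left)
qed

lemma constant_toggling_cong:
  assumes "constant_toggling l V E a s" and "[a = a'] (mod l)" and "[s = s'] (mod l)"
  shows "constant_toggling l V E a' s'"
proof -
  obtain x where "adj_wins l V E (\<lambda>_. a) x" "[sum x V = s] (mod l)"
    using assms(1) unfolding constant_toggling_def by blast
  then show ?thesis
    unfolding constant_toggling_def using assms(2,3) adj_wins_cong_labels cong_trans
    by meson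
qed

lemma mod_in_toggling_numbers_A:
  assumes "l > 0" and "constant_toggling l V E a s"
  shows "s mod l \<in> toggling_numbers_A l V E V a"
  using assms constant_toggling_cong[OF assms(2) cong_refl, of "s mod l"]
  by (simp add: toggling_numbers_A_iff)

lemma constant_toggling_multiple_of_minimal:
  assumes "l > 0" and "r > 0" and "constant_toggling l V E r t"
    and minimal: "\<forall>r'. 0 < r' \<and> r' < r \<longrightarrow> toggling_numbers_A l V E V r' = {}"
    and "constant_toggling l V E a s"
  shows "\<exists>k. [a = k * r] (mod l)"
proof -
  define g where "g = gcd (a mod l) r"
  obtain u w where bezout: "u * (a mod l) + w * r = g"
    unfolding g_def using bezout_int by blast
  have "constant_toggling l V E (a mod l) s"
    using constant_toggling_cong assms(5) by fastforce
  then have "constant_toggling l V E g (u * s + w * t)"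
    unfolding bezout[symmetric] using assms(3) by (intro constant_toggling_add constant_toggling_scale)
  then have "toggling_numbers_A l V E V g \<noteq> {}"
    using mod_in_toggling_numbers_A assms(1) by blast
  moreover have "0 < g" "g \<le> r"
    unfolding g_def using \<open>r > 0\<close> by (simp_all add: gcd_le2_int)
  ultimately have "g = r" using minimal by force
  then obtain k where "a mod l = r * k"
    unfolding g_def by (metis gcd_dvd1 dvdE)
  then have "[a = k * r] (mod l)"
    by (metis cong_mod_left cong_refl mult.commute)
  then show ?thesis ..
qed

lemma constant_toggling_decompose:
  assumes "l > 0" and "r > 0" and "constant_toggling l V E r t"
    and "\<forall>r'. 0 < r' \<and> r' < r \<longrightarrow> toggling_numbers_A l V E V r' = {}"
    and "constant_toggling l V E a s"
  shows "\<exists>k. \<exists>q \<in> toggling_numbers_A l V E V 0. [a = k * r] (mod l) \<and> [s = k * t + q] (mod l)"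
proof -
  obtain k where k: "[a = k * r] (mod l)"
    using constant_toggling_multiple_of_minimal[OF assms] by blast
  have "constant_toggling l V E (a + (- k) * r) (s + (- k) * t)"
    using assms(3,5) by (intro constant_toggling_add constant_toggling_scale)
  moreover have "[a + (- k) * r = 0] (mod l)"
    using k unfolding cong_iff_dvd_diff by simp
  ultimately have "constant_toggling l V E 0 (s - k * t)"
    by (rule constant_toggling_cong) simp
  then have "(s - k * t) mod l \<in> toggling_numbers_A l V E V 0"
    using mod_in_toggling_numbers_A \<open>l > 0\<close> by blast
  moreover have "[s = k * t + (s - k * t) mod l] (mod l)"
    by (simp add: cong_def mod_add_right_eq)
  ultimately show ?thesis using k by blast
qed

lemma nbh_wins_complement_iff:
  assumes "simple_graph V E"
  shows "nbh_wins l V (complement_graph V E) \<pi> (\<lambda>u. - y u)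
     \<longleftrightarrow> adj_wins l V E (\<lambda>w. \<pi> w - sum y V) y"
proof -
  have eq: "\<pi> w + - y w + (\<Sum>u\<in>V. if complement_graph V E u w then - y u else 0)
      = \<pi> w - sum y V + (\<Sum>u\<in>V. if E u w then y u else 0)" if "w \<in> V" for w
  proof -
    have "sum y V = (\<Sum>u\<in>V. (if u = w then y u else 0) + (if E u w then y u else 0)
                      + (if complement_graph V E u w then y u else 0))"
      using assms that by (intro sum.cong) (auto simp: simple_graph_def complement_graph_def)
    also have "\<dots> = y w + (\<Sum>u\<in>V. if E u w then y u else 0)
                  + (\<Sum>u\<in>V. if complement_graph V E u w then y u else 0)"
      using assms \<open>w \<in> V\<close> by (simp add: simple_graph_def sum.distrib)
    moreover have "(\<Sum>u\<in>V. if complement_graph V E u w then - y u else 0)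
        = - (\<Sum>u\<in>V. if complement_graph V E u w then y u else 0)"
      by (subst sum_negf[symmetric]) (rule sum.cong; simp)
    ultimately show ?thesis
      by simp
  qed
  then show ?thesis
    unfolding nbh_wins_def adj_wins_def by (simp only: eq cong: ball_cong)
qed

lemma N_AW_complement_iff_adj_wins:
  assumes "simple_graph V E"
  shows "N_AW l V (complement_graph V E) \<longleftrightarrow> (\<forall>\<pi>. \<exists>y. adj_wins l V E (\<lambda>w. \<pi> w - sum y V) y)"
proof -
  have "nbh_winnable l V (complement_graph V E) \<pi> \<longleftrightarrow>
        (\<exists>y. nbh_wins l V (complement_graph V E) \<pi> (\<lambda>u. - y u))" for \<pi>
  proof
    assume "nbh_winnable l V (complement_graph V E) \<pi>"
    then obtain x where "nbh_wins l V (complement_graph V E) \<pi> (\<lambda>u. - (- x u))"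
      unfolding nbh_winnable_def by auto
    then show "\<exists>y. nbh_wins l V (complement_graph V E) \<pi> (\<lambda>u. - y u)"
      by (rule exI[of _ "\<lambda>u. - x u"])
  qed (auto simp: nbh_winnable_def)
  then show ?thesis
    unfolding N_AW_def nbh_wins_complement_iff[OF assms] by (rule all_cong1)
qed

lemma solvable_congruence_if_constant_wins:
  assumes "l > 0" and "r > 0" and "constant_toggling l V E r t"
    and "\<forall>r'. 0 < r' \<and> r' < r \<longrightarrow> toggling_numbers_A l V E V r' = {}"
    and "adj_wins l V E (\<lambda>_. z - sum y V) y"
  shows "\<exists>q \<in> toggling_numbers_A l V E V 0. \<exists>x. [(r + t) * x = z + q] (mod l)"
proof -
  have "constant_toggling l V E (z - sum y V) (sum y V)"
    using assms(5) unfolding constant_toggling_def using cong_refl by blast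
  then have "constant_toggling l V E (sum y V - z) (- sum y V)"
    using constant_toggling_scale[of l V E _ _ "-1"] by fastforce
  then obtain k q where "q \<in> toggling_numbers_A l V E V 0"
    and "[sum y V - z = k * r] (mod l)" and "[- sum y V = k * t + q] (mod l)"
    using constant_toggling_decompose[OF assms(1-4)] by blast
  moreover from this(2,3) have "[(r + t) * (- k) = z + q] (mod l)"
    unfolding cong_iff_dvd_diff dvd_def by algebra
  ultimately show ?thesis
    by blast
qed

lemma adj_wins_minus_total_if_congruence:
  assumes "constant_toggling l V E r t" and y0: "adj_wins l V E (\<lambda>w. \<pi> w + s) y0"
    and "q \<in> toggling_numbers_A l V E V 0"
    and x: "[(r + t) * x = - (s + sum y0 V) + q] (mod l)"
  shows "\<exists>y. adj_wins l V E (\<lambda>w. \<pi> w - sum y V) y"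
proof -
  have "constant_toggling l V E 0 q"
    using assms(3) by (simp add: toggling_numbers_A_iff)
  then have "constant_toggling l V E (x * r + (-1) * 0) (x * t + (-1) * q)"
    using assms(1) by (intro constant_toggling_add constant_toggling_scale)
  then obtain y1 where y1: "adj_wins l V E (\<lambda>_. x * r) y1"
    and sum_y1: "[sum y1 V = x * t - q] (mod l)"
    unfolding constant_toggling_def by auto
  from x sum_y1 have "[\<pi> w + s + x * r = \<pi> w - (sum y0 V + sum y1 V)] (mod l)" for w
    unfolding cong_iff_dvd_diff dvd_def by algebra
  then have "adj_wins l V E (\<lambda>w. \<pi> w - sum (\<lambda>u. y0 u + y1 u) V) (\<lambda>u. y0 u + y1 u)"
    by (intro adj_wins_cong_labels[OF adj_wins_add[OF y0 y1]]) (simp add: sum.distrib)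
  then show ?thesis
    by (rule exI[of _ "\<lambda>u. y0 u + y1 u"])
qed

lemma N_AW_complement_iff_toggling_numbers:
  assumes "l > 0" and "simple_graph V E" and "r > 0"
    and minimal: "\<forall>r'. 0 < r' \<and> r' < r \<longrightarrow> toggling_numbers_A l V E V r' = {}"
    and "t \<in> toggling_numbers_A l V E V r"
  shows "N_AW l V (complement_graph V E) \<longleftrightarrow>
           (\<forall>\<pi>. \<exists>s. adj_winnable l V E (\<lambda>w. \<pi> w + s))
         \<and> (\<forall>z. \<exists>q \<in> toggling_numbers_A l V E V 0. \<exists>x. [(r + t) * x = z + q] (mod l))"
    (is "_ \<longleftrightarrow> ?shift \<and> ?solvable")
proof -
  have rt: "constant_toggling l V E r t"
    using assms(5) by (simp add: toggling_numbers_A_iff)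
  have "?shift \<and> ?solvable" if N: "\<forall>\<pi>. \<exists>y. adj_wins l V E (\<lambda>w. \<pi> w - sum y V) y"
  proof
    show ?shift
      using N unfolding adj_winnable_def diff_conv_add_uminus by blast
    show ?solvable
    proof
      fix z
      obtain y where "adj_wins l V E (\<lambda>_. z - sum y V) y"
        using spec[OF N, of "\<lambda>_. z"] by blast
      then show "\<exists>q \<in> toggling_numbers_A l V E V 0. \<exists>x. [(r + t) * x = z + q] (mod l)"
        by (rule solvable_congruence_if_constant_wins[OF assms(1,3) rt minimal])
    qed
  qed
  moreover have "\<exists>y. adj_wins l V E (\<lambda>w. \<pi> w - sum y V) y" if ?shift and ?solvable for \<pi>
  proof -
    obtain s y0 where "adj_wins l V E (\<lambda>w. \<pi> w + s) y0"
      using \<open>?shift\<close> unfolding adj_winnable_def by blast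
    moreover obtain q x where "q \<in> toggling_numbers_A l V E V 0"
      and "[(r + t) * x = - (s + sum y0 V) + q] (mod l)"
      using \<open>?solvable\<close> by blast
    ultimately show ?thesis
      using adj_wins_minus_total_if_congruence[OF rt] by blast
  qed
  ultimately show ?thesis
    unfolding N_AW_complement_iff_adj_wins[OF assms(2)] by blast
qed

lemma adj_wins_pendant_iff:
  assumes G: "simple_graph V E" and "p \<in> V" and "E p v" and pendant: "\<forall>u. E p u \<longrightarrow> u = v"
  defines "V' \<equiv> V - {p, v}"
  shows "adj_wins l V E \<pi> x \<longleftrightarrow>
           [\<pi> p + x v = 0] (mod l)
         \<and> [\<pi> v + (\<Sum>u\<in>V. if E u v then x u else 0) = 0] (mod l)
         \<and> adj_wins l V' (induced_subgraph E V') (\<lambda>w. \<pi> w + (if E v w then x v else 0)) x"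
proof -
  have fin: "finite V" and edges_in_V: "\<And>u w. E u w \<Longrightarrow> u \<in> V \<and> w \<in> V"
    and sym: "\<And>u w. E u w \<Longrightarrow> E w u" and irrefl: "\<And>u. \<not> E u u"
    using G unfolding simple_graph_def by blast+
  have "v \<in> V" "E v p" "p \<noteq> v"
    using edges_in_V[OF \<open>E p v\<close>] sym[OF \<open>E p v\<close>] irrefl[of p] \<open>E p v\<close> by auto
  have into_p: "E u p \<longleftrightarrow> u = v" for u
    using pendant sym \<open>E v p\<close> by blast
  from fin \<open>v \<in> V\<close> \<open>p \<noteq> v\<close> have V: "V = insert p (insert v V')" and "p \<notin> V'" "v \<notin> V'" "finite V'"
    using \<open>p \<in> V\<close> unfolding V'_def by auto
  have at_p: "(\<Sum>u\<in>V. if E u p then x u else 0) = x v"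
  proof -
    have "(\<Sum>u\<in>V. if E u p then x u else 0) = (\<Sum>u\<in>V. if u = v then x u else 0)"
      by (simp only: into_p)
    then show ?thesis
      using fin \<open>v \<in> V\<close> by simp
  qed
  have at_V': "(\<Sum>u\<in>V. if E u w then x u else 0)
      = (if E v w then x v else 0) + (\<Sum>u\<in>V'. if induced_subgraph E V' u w then x u else 0)"
    if "w \<in> V'" for w
  proof -
    have "\<not> E p w"
      using pendant that unfolding V'_def by blast
    moreover have "(\<Sum>u\<in>V'. if induced_subgraph E V' u w then x u else 0)
        = (\<Sum>u\<in>V'. if E u w then x u else 0)"
      using that by (intro sum.cong) (auto simp: induced_subgraph_def)
    ultimately show ?thesis
      unfolding V using \<open>finite V'\<close> \<open>p \<noteq> v\<close> \<open>p \<notin> V'\<close> \<open>v \<notin> V'\<close> by simp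
  qed
  have split_V: "(\<forall>w\<in>V. P w) \<longleftrightarrow> P p \<and> P v \<and> (\<forall>w\<in>V'. P w)" for P
    using V by auto
  show ?thesis
    unfolding adj_wins_def split_V by (simp add: at_p at_V' add.assoc cong: ball_cong)
qed

lemma A_AW_induced_if_pendant:
  assumes "simple_graph V E" and "p \<in> V" and "E p v" and "\<forall>u. E p u \<longrightarrow> u = v"
    and A: "A_AW l V E"
  defines "V' \<equiv> V - {p, v}"
  shows "A_AW l V' (induced_subgraph E V')"
  unfolding A_AW_def adj_winnable_def
proof
  fix \<pi>'
  obtain x where "adj_wins l V E (\<lambda>w. if w \<in> V' then \<pi>' w else 0) x"
    using A unfolding A_AW_def adj_winnable_def by blast
  then have xv: "[x v = 0] (mod l)"
    and x: "adj_wins l V' (induced_subgraph E V')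
              (\<lambda>w. (if w \<in> V' then \<pi>' w else 0) + (if E v w then x v else 0)) x"
    unfolding adj_wins_pendant_iff[OF assms(1-4), folded V'_def] by (simp_all add: V'_def)
  have "adj_wins l V' (induced_subgraph E V') \<pi>' x"
  proof (rule adj_wins_cong_labels[OF x])
    fix w assume "w \<in> V'"
    have "[\<pi>' w + (if E v w then x v else 0) = \<pi>' w + 0] (mod l)"
      using xv by (intro cong_add) auto
    then show "[(if w \<in> V' then \<pi>' w else 0) + (if E v w then x v else 0) = \<pi>' w] (mod l)"
      using \<open>w \<in> V'\<close> by simp
  qed
  then show "\<exists>x. adj_wins l V' (induced_subgraph E V') \<pi>' x"
    by (rule exI[of _ x])
qed

lemma A_AW_pendant_if_induced:
  assumes G: "simple_graph V E" and "p \<in> V" and "E p v" and "\<forall>u. E p u \<longrightarrow> u = v"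
    and A': "A_AW l (V - {p, v}) (induced_subgraph E (V - {p, v}))"
  shows "A_AW l V E"
  unfolding A_AW_def adj_winnable_def
proof
  fix \<pi>
  define V' where "V' = V - {p, v}"
  have "finite V" and "p \<noteq> v" and "\<not> E v v"
    using G \<open>E p v\<close> unfolding simple_graph_def by blast+
  obtain x' where x': "adj_wins l V' (induced_subgraph E V')
                         (\<lambda>w. \<pi> w + (if E v w then - \<pi> p else 0)) x'"
    using A' unfolding V'_def[symmetric] A_AW_def adj_winnable_def by blast
  define x where "x = x'(v := - \<pi> p, p := - \<pi> v - (\<Sum>u\<in>V - {p}. if E u v then x' u else 0))"
  have "adj_wins l V E \<pi> x"
    unfolding adj_wins_pendant_iff[OF assms(1-4), folded V'_def]
  proof (intro conjI)
    show "[\<pi> p + x v = 0] (mod l)"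
      using \<open>p \<noteq> v\<close> by (simp add: x_def)
    have "(\<Sum>u\<in>V. if E u v then x u else 0) = x p + (\<Sum>u\<in>V - {p}. if E u v then x u else 0)"
      using \<open>finite V\<close> \<open>p \<in> V\<close> \<open>E p v\<close> by (simp add: sum.remove)
    also have "(\<Sum>u\<in>V - {p}. if E u v then x u else 0) = (\<Sum>u\<in>V - {p}. if E u v then x' u else 0)"
      using \<open>\<not> E v v\<close> by (intro sum.cong) (auto simp: x_def)
    finally show "[\<pi> v + (\<Sum>u\<in>V. if E u v then x u else 0) = 0] (mod l)"
      by (simp add: x_def)
    have xv: "x v = - \<pi> p"
      using \<open>p \<noteq> v\<close> by (simp add: x_def)
    have "x u = x' u" if "u \<in> V'" for u
      using that by (simp add: x_def V'_def)
    then show "adj_wins l V' (induced_subgraph E V') (\<lambda>w. \<pi> w + (if E v w then x v else 0)) x"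
      unfolding xv using x' adj_wins_cong_toggles[of V' x x'] by blast
  qed
  then show "\<exists>x. adj_wins l V E \<pi> x"
    by (rule exI[of _ x])
qed

theorem theorem3p6:
  fixes V :: "'a set" and E :: "'a \<Rightarrow> 'a \<Rightarrow> bool" and l :: int and p v :: 'a
  assumes "l \<ge> 2"
    and "simple_graph V E"
    and "p \<in> V" and "E p v" and "\<forall>u. E p u \<longrightarrow> u = v"
  shows "(A_AW l V E \<longleftrightarrow>
            A_AW l (V - {p, v}) (induced_subgraph E (V - {p, v})))
       \<and> (\<forall>r t. r > 0 \<and> toggling_numbers_A l V E V r \<noteq> {}
              \<and> (\<forall>r'. 0 < r' \<and> r' < r \<longrightarrow> toggling_numbers_A l V E V r' = {})
              \<and> t \<in> toggling_numbers_A l V E V r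
            \<longrightarrow> (N_AW l V (complement_graph V E) \<longleftrightarrow>
                   (\<forall>\<pi>. \<exists>s. adj_winnable l V E (\<lambda>w. \<pi> w + s))
                 \<and> (\<forall>z. \<exists>q \<in> toggling_numbers_A l V E V 0.
                        \<exists>x. [(r + t) * x = z + q] (mod l))))"
proof (intro conjI allI impI)
  show "A_AW l V E \<longleftrightarrow> A_AW l (V - {p, v}) (induced_subgraph E (V - {p, v}))"
    using A_AW_induced_if_pendant[OF assms(2-5)] A_AW_pendant_if_induced[OF assms(2-5)] by blast
next
  fix r t
  assume "r > 0 \<and> toggling_numbers_A l V E V r \<noteq> {}
          \<and> (\<forall>r'. 0 < r' \<and> r' < r \<longrightarrow> toggling_numbers_A l V E V r' = {})
          \<and> t \<in> toggling_numbers_A l V E V r"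
  moreover have "l > 0"
    using assms(1) by simp
  ultimately show "N_AW l V (complement_graph V E) \<longleftrightarrow>
      (\<forall>\<pi>. \<exists>s. adj_winnable l V E (\<lambda>w. \<pi> w + s))
    \<and> (\<forall>z. \<exists>q \<in> toggling_numbers_A l V E V 0. \<exists>x. [(r + t) * x = z + q] (mod l))"
    using N_AW_complement_iff_toggling_numbers assms(2) by blast
qed

end
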